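(* Let $\operatorname{P}\in\operatorname{MM}(A,\theta,S)$ and suppose $\theta_i$ is varied to $\tilde\theta_i\in(0,1)$, where $i\in S_j$. Then: (i) for a generic $\tilde\theta_i$-covariation scheme $\sigma$ with image parameter $\tilde\theta$, $$\mathcal{D}_{\operatorname{CD}}(\sigma(\operatorname{P}),\operatorname{P})=\log\max_{y\in\mathbb{Y}_{S_j}^{\neq}}\prod_{l\in S_j}\Big(\frac{\tilde\theta_l}{\theta_l}\Big)^{A_{y,l}}-\log\min_{y\in\mathbb{Y}_{S_j}^{\neq}}\prod_{l\in S_j}\Big(\frac{\tilde\theta_l}{\theta_l}\Big)^{A_{y,l}};$$ (ii) for proportional covariation, $$\mathcal{D}_{\operatorname{CD}}(\sigma_{\operatorname{pro}}(\operatorname{P}),\operatorname{P})=\log\max_{y\in\mathbb{Y}_{S_j}^{\neq}}\Big(\frac{\tilde\theta_i}{\theta_i}\Big)^{A_{y,i}}\Big(\frac{1-\tilde\theta_i}{1-\theta_i}\Big)^{|A_{y,S_j^{-i}}|}-\log\min_{y\in\mathbb{Y}_{S_j}^{\neq}}\Big(\frac{\tilde\theta_i}{\theta_i}\Big)^{A_{y,i}}\Big(\frac{1-\tilde\theta_i}{1-\theta_i}\Big)^{|A_{y,S_j^{-i}}|};$$ (iii) for uniform covariation, $$\mathcal{D}_{\operatorname{CD}}(\sigma_{\operatorname{uni}}(\operatorname{P}),\operatorname{P})=\log\max_{y\in\mathbb{Y}_{S_j}^{\neq}}\frac{\tilde\theta_i^{A_{y,i}}\big(\frac{1-\tilde\theta_i}{\#S_j-1}\big)^{|A_{y,S_j^{-i}}|}}{\prod_{l\in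 S_j}\theta_l^{A_{y,l}}}-\log\min_{y\in\mathbb{Y}_{S_j}^{\neq}}\frac{\tilde\theta_i^{A_{y,i}}\big(\frac{1-\tilde\theta_i}{\#S_j-1}\big)^{|A_{y,S_j^{-i}}|}}{\prod_{l\in S_j}\theta_l^{A_{y,l}}};$$ (iv) for linear covariation with coefficients $\gamma_k,\delta_k$, $$\mathcal{D}_{\operatorname{CD}}(\sigma_{\operatorname{lin}}(\operatorname{P}),\operatorname{P})=\log\max_{y\in\mathbb{Y}_{S_j}^{\neq}}\Big(\frac{\tilde\theta_i}{\theta_i}\Big)^{A_{y,i}}\prod_{k\in S_j^{-i}}\Big(\frac{\gamma_k\tilde\theta_i+\delta_k}{\theta_k}\Big)^{A_{y,k}}-\log\min_{y\in\mathbb{Y}_{S_j}^{\neq}}\Big(\frac{\tilde\theta_i}{\theta_i}\Big)^{A_{y,i}}\prod_{k\in S_j^{-i}}\Big(\frac{\gamma_k\tilde\theta_i+\delta_k}{\theta_k}\Big)^{A_{y,k}}.$$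
   Context: Let $\mathbb{Y}$ be a finite set with $q$ elements. A monomial model $\operatorname{MM}(A,\theta,S)$ is given by $A\in\mathcal{M}_{q\times k}(\mathbb{Z}_{\ge0})$ with rows $A_y$, $y\in\mathbb{Y}$, parameters $\theta\in\mathbb{R}^k_{>0}$, and a partition $S=\{S_1,\dots,S_n\}$ of $[k]$ with each block $(\theta_l)_{l\in S_m}$ in the open probability simplex; $\operatorname{P}(y)=\prod_l\theta_l^{A_{y,l}}$, which is a probability distribution on $\mathbb{Y}$ for every such parameter. Notation: $S_j^{-i}=S_j\setminus\{i\}$, $|A_{y,H}|=\sum_{l\in H}A_{y,l}$; for $\emptyset\ne H\subset[k]$, $\mathbb{Y}_H^{=}=\{y\in\mathbb{Y}: A_{y,l}=0\text{ for all }l\in H\}$ and $\mathbb{Y}_H^{\neq}=\mathbb{Y}\setminus\mathbb{Y}_H^{=}$. A $\tilde\theta_i$-covariation scheme $\sigma$ ($i\in S_j$) maps $\theta$ to $\tilde\theta$ with $\tilde\theta_i$ given, $\tilde\theta_l=\theta_l$ for $l\notin S_j$, and $(\tilde\theta_l)_{l\in S_j}$ in the open simplex; $\sigma(\operatorname{P})(y)=\tilde\theta^{A_y}$. Proportional: $\tilde\theta_k=\frac{1-\tilde\theta_i}{1-\theta_i}\theta_k$; uniform: $\tilde\theta_k=\frac{1-\tilde\theta_i}{\#S_j-1}$; linear: $\tilde\theta_k=\gamma_k\tilde\theta_i+\delta_k$, constants chosen so the block sums to one ($k\in S_j^{-i}$). The CD distance between distributions $\tilde{\operatorname{P}},\operatorname{P}$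 on $\mathbb{Y}$ is $\mathcal{D}_{\operatorname{CD}}(\tilde{\operatorname{P}},\operatorname{P})=\log\max_{y}\frac{\tilde{\operatorname{P}}(y)}{\operatorname{P}(y)}-\log\min_y\frac{\tilde{\operatorname{P}}(y)}{\operatorname{P}(y)}$. *)

theory Defs
  imports Complex_Main "HOL-Library.Disjoint_Sets"
begin

text \<open>Parameters: indices are [k] = {1..k}; \<theta> :: nat \<Rightarrow> real (values outside [k] irrelevant).\<close>

definition open_simplex :: "nat set \<Rightarrow> (nat \<Rightarrow> real) \<Rightarrow> bool" where
  "open_simplex B \<theta> \<longleftrightarrow> (\<forall>l\<in>B. 0 < \<theta> l) \<and> (\<Sum>l\<in>B. \<theta> l) = 1"

definition mm_param :: "nat \<Rightarrow> nat set set \<Rightarrow> (nat \<Rightarrow> real) \<Rightarrow> bool" where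
  "mm_param k S \<theta> \<longleftrightarrow> (\<forall>l\<in>{1..k}. 0 < \<theta> l) \<and> (\<forall>B\<in>S. open_simplex B \<theta>)"

definition mono_prob :: "('y \<Rightarrow> nat \<Rightarrow> nat) \<Rightarrow> nat \<Rightarrow> (nat \<Rightarrow> real) \<Rightarrow> 'y \<Rightarrow> real" where
  "mono_prob A k \<theta> y = (\<Prod>l\<in>{1..k}. \<theta> l ^ A y l)"

definition monomial_model :: "'y set \<Rightarrow> ('y \<Rightarrow> nat \<Rightarrow> nat) \<Rightarrow> nat \<Rightarrow> nat set set \<Rightarrow> bool" where
  "monomial_model Y A k S \<longleftrightarrow> finite Y \<and> partition_on {1..k} S \<and>
     (\<forall>\<theta>. mm_param k S \<theta> \<longrightarrow> (\<Sum>y\<in>Y. mono_prob A k \<theta> y) = 1)"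

definition Y_neq :: "'y set \<Rightarrow> ('y \<Rightarrow> nat \<Rightarrow> nat) \<Rightarrow> nat set \<Rightarrow> 'y set" where
  "Y_neq Y A H = {y \<in> Y. \<exists>l\<in>H. A y l \<noteq> 0}"

definition cov_image :: "nat \<Rightarrow> nat set \<Rightarrow> nat \<Rightarrow> (nat \<Rightarrow> real) \<Rightarrow> real \<Rightarrow> (nat \<Rightarrow> real) \<Rightarrow> bool" where
  "cov_image k Sj i \<theta> t \<theta>' \<longleftrightarrow> \<theta>' i = t \<and> (\<forall>l\<in>{1..k} - Sj. \<theta>' l = \<theta> l) \<and> open_simplex Sj \<theta>'"

definition prop_cov :: "nat set \<Rightarrow> nat \<Rightarrow> (nat \<Rightarrow> real) \<Rightarrow> real \<Rightarrow> nat \<Rightarrow> real" where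
  "prop_cov Sj i \<theta> t l = (if l = i then t else if l \<in> Sj then (1 - t) / (1 - \<theta> i) * \<theta> l else \<theta> l)"

definition uni_cov :: "nat set \<Rightarrow> nat \<Rightarrow> (nat \<Rightarrow> real) \<Rightarrow> real \<Rightarrow> nat \<Rightarrow> real" where
  "uni_cov Sj i \<theta> t l = (if l = i then t else if l \<in> Sj then (1 - t) / (real (card Sj) - 1) else \<theta> l)"

definition lin_cov :: "nat set \<Rightarrow> nat \<Rightarrow> (nat \<Rightarrow> real) \<Rightarrow> (nat \<Rightarrow> real) \<Rightarrow> (nat \<Rightarrow> real) \<Rightarrow> real \<Rightarrow> nat \<Rightarrow> real" where
  "lin_cov Sj i \<theta> \<gamma> \<delta> t l = (if l = i then t else if l \<in> Sj then \<gamma> l * t + \<delta> l else \<theta> l)"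

definition cd_dist :: "'y set \<Rightarrow> ('y \<Rightarrow> real) \<Rightarrow> ('y \<Rightarrow> real) \<Rightarrow> real" where
  "cd_dist Y P' P = ln (Max ((\<lambda>y. P' y / P y) ` Y)) - ln (Min ((\<lambda>y. P' y / P y) ` Y))"

end

theory Submission
  imports Defs
begin

text \<open>
  Changing the parameters of one block \<open>S\<^sub>j\<close> multiplies \<open>P(y)\<close> by the block factor
  \<open>f(y) = \<Prod>\<^bsub>l\<in>S\<^sub>j\<^esub> (\<theta>'\<^sub>l/\<theta>\<^sub>l)\<^bsup>A\<^sub>y\<^sub>,\<^sub>l\<^esup>\<close>, which equals 1 outside \<open>Y\<^sup>\<noteq>\<^sub>S\<^sub>j\<close>.
  Since both distributions have total mass 1, they also have equal mass on \<open>Y\<^sup>\<noteq>\<^sub>S\<^sub>j\<close>,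
  so the \<open>P\<close>-weighted mean of \<open>f\<close> over \<open>Y\<^sup>\<noteq>\<^sub>S\<^sub>j\<close> is 1. Hence
  \<open>min f \<le> 1 \<le> max f\<close> there, and the outcomes with \<open>f(y) = 1\<close> affect neither extremum of the
  likelihood ratio. The formulas for the three specific schemes are then the block factor
  evaluated for each of them.
\<close>

lemma weighted_mean_between_Min_Max:
  fixes f w :: "'a \<Rightarrow> real"
  assumes "finite N" "N \<noteq> {}" "\<forall>y\<in>N. 0 < w y"
    and mean: "(\<Sum>y\<in>N. w y * f y) = c * (\<Sum>y\<in>N. w y)"
  shows "Min (f ` N) \<le> c" "c \<le> Max (f ` N)"
proof -
  have pos: "0 < (\<Sum>y\<in>N. w y)"
    using assms by (intro sum_pos) auto
  have "(\<Sum>y\<in>N. w y) * Min (f ` N) = (\<Sum>y\<in>N. w y * Min (f ` N))"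
    by (rule sum_distrib_right)
  also have "\<dots> \<le> (\<Sum>y\<in>N. w y * f y)"
    using assms by (intro sum_mono mult_left_mono) auto
  finally show "Min (f ` N) \<le> c"
    using pos by (simp add: mean)
  have "c * (\<Sum>y\<in>N. w y) = (\<Sum>y\<in>N. w y * f y)"
    by (simp add: mean)
  also have "\<dots> \<le> (\<Sum>y\<in>N. w y * Max (f ` N))"
    using assms by (intro sum_mono mult_left_mono) auto
  also have "\<dots> = (\<Sum>y\<in>N. w y) * Max (f ` N)"
    by (rule sum_distrib_right[symmetric])
  finally show "c \<le> Max (f ` N)"
    using pos by simp
qed

lemma Max_image_eq_if_const_outside:
  fixes f :: "'a \<Rightarrow> 'b::linorder"
  assumes "finite Y" "N \<subseteq> Y" "N \<noteq> {}" "\<forall>y\<in>Y - N. f y = c" "c \<le> Max (f ` N)"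
  shows "Max (f ` Y) = Max (f ` N)"
proof (rule Max_eqI)
  have "finite N"
    using assms finite_subset by blast
  then have "Max (f ` N) \<in> f ` N"
    using \<open>N \<noteq> {}\<close> by simp
  then show "Max (f ` N) \<in> f ` Y"
    using \<open>N \<subseteq> Y\<close> by blast
  show "finite (f ` Y)"
    using \<open>finite Y\<close> by simp
  show "x \<le> Max (f ` N)" if "x \<in> f ` Y" for x
    using that assms \<open>finite N\<close> by (cases "x \<in> f ` N") auto
qed

lemma Min_image_eq_if_const_outside:
  fixes f :: "'a \<Rightarrow> 'b::linorder"
  assumes "finite Y" "N \<subseteq> Y" "N \<noteq> {}" "\<forall>y\<in>Y - N. f y = c" "Min (f ` N) \<le> c"
  shows "Min (f ` Y) = Min (f ` N)"
proof (rule Min_eqI)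
  have "finite N"
    using assms finite_subset by blast
  then have "Min (f ` N) \<in> f ` N"
    using \<open>N \<noteq> {}\<close> by simp
  then show "Min (f ` N) \<in> f ` Y"
    using \<open>N \<subseteq> Y\<close> by blast
  show "finite (f ` Y)"
    using \<open>finite Y\<close> by simp
  show "Min (f ` N) \<le> x" if "x \<in> f ` Y" for x
    using that assms \<open>finite N\<close> by (cases "x \<in> f ` N") auto
qed

lemma cd_dist_localized:
  fixes P P' f :: "'y \<Rightarrow> real"
  assumes "finite Y" "N \<subseteq> Y" "N \<noteq> {}"
    and P_pos: "\<forall>y\<in>Y. 0 < P y"
    and mass: "(\<Sum>y\<in>Y. P' y) = (\<Sum>y\<in>Y. P y)"
    and factor: "\<forall>y\<in>Y. P' y = P y * f y"
    and one_outside: "\<forall>y\<in>Y - N. f y = 1"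
  shows "cd_dist Y P' P = ln (Max (f ` N)) - ln (Min (f ` N))"
proof -
  have "(\<Sum>y\<in>Y - N. P' y) = (\<Sum>y\<in>Y - N. P y)"
    using factor one_outside by (intro sum.cong) auto
  then have "(\<Sum>y\<in>N. P' y) = (\<Sum>y\<in>N. P y)"
    using mass sum.subset_diff[OF \<open>N \<subseteq> Y\<close> \<open>finite Y\<close>, of P']
      sum.subset_diff[OF \<open>N \<subseteq> Y\<close> \<open>finite Y\<close>, of P] by simp
  then have "(\<Sum>y\<in>N. P y * f y) = 1 * (\<Sum>y\<in>N. P y)"
    using factor \<open>N \<subseteq> Y\<close> by (simp add: subset_iff)
  moreover have "finite N" "\<forall>y\<in>N. 0 < P y"
    using assms finite_subset by blast+
  ultimately have min_le: "Min (f ` N) \<le> 1" and max_ge: "1 \<le> Max (f ` N)"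
    using weighted_mean_between_Min_Max[OF _ \<open>N \<noteq> {}\<close>] by blast+
  have "Max (f ` Y) = Max (f ` N)"
    by (rule Max_image_eq_if_const_outside[OF assms(1-3) one_outside max_ge])
  moreover have "Min (f ` Y) = Min (f ` N)"
    by (rule Min_image_eq_if_const_outside[OF assms(1-3) one_outside min_le])
  moreover have "(\<lambda>y. P' y / P y) ` Y = f ` Y"
    using factor P_pos by (intro image_cong) auto
  ultimately show ?thesis
    unfolding cd_dist_def by simp
qed

lemma mm_param_cov_image:
  assumes "partition_on {1..k} S" "mm_param k S \<theta>" "Sj \<in> S" "cov_image k Sj i \<theta> t \<theta>'"
  shows "mm_param k S \<theta>'"
  unfolding mm_param_def
proof (intro conjI ballI)
  show "0 < \<theta>' l" if "l \<in> {1..k}" for l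
  proof (cases "l \<in> Sj")
    case True
    then show ?thesis
      using assms(4) unfolding cov_image_def open_simplex_def by blast
  next
    case False
    then show ?thesis
      using assms(2,4) that unfolding cov_image_def mm_param_def by simp
  qed
  show "open_simplex B \<theta>'" if B: "B \<in> S" for B
  proof (cases "B = Sj")
    case True
    then show ?thesis
      using assms(4) unfolding cov_image_def by simp
  next
    case False
    then have "B \<inter> Sj = {}" "B \<subseteq> {1..k}"
      using assms(1,3) B unfolding partition_on_def by (blast dest: disjointD)+
    then have "\<forall>l\<in>B. \<theta>' l = \<theta> l"
      using assms(4) unfolding cov_image_def by blast
    then show ?thesis
      using assms(2) B unfolding mm_param_def open_simplex_def by simp
  qed
qed

lemma mono_prob_ratio_block:
  assumes "Sj \<subseteq> {1..k}" "\<forall>l\<in>{1..k}. \<theta> l \<noteq> 0" "\<forall>l\<in>{1..k} - Sj. \<theta>' l = \<theta> l"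
  shows "mono_prob A k \<theta>' y / mono_prob A k \<theta> y = (\<Prod>l\<in>Sj. (\<theta>' l / \<theta> l) ^ A y l)"
proof -
  have "mono_prob A k \<theta>' y / mono_prob A k \<theta> y = (\<Prod>l\<in>{1..k}. (\<theta>' l / \<theta> l) ^ A y l)"
    unfolding mono_prob_def by (simp add: prod_dividef power_divide)
  also have "\<dots> = (\<Prod>l\<in>Sj. (\<theta>' l / \<theta> l) ^ A y l)"
    using assms by (intro prod.mono_neutral_right) auto
  finally show ?thesis .
qed

lemma cd_dist_cov_image:
  assumes MM: "monomial_model Y A k S"
    and par: "mm_param k S \<theta>"
    and Sj: "Sj \<in> S"
    and nonempty: "Y_neq Y A Sj \<noteq> {}"
    and cov: "cov_image k Sj i \<theta> t \<theta>'"
  shows "cd_dist Y (mono_prob A k \<theta>') (mono_prob A k \<theta>) =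
        ln (Max ((\<lambda>y. \<Prod>l\<in>Sj. (\<theta>' l / \<theta> l) ^ A y l) ` Y_neq Y A Sj))
      - ln (Min ((\<lambda>y. \<Prod>l\<in>Sj. (\<theta>' l / \<theta> l) ^ A y l) ` Y_neq Y A Sj))"
proof (rule cd_dist_localized)
  have part: "partition_on {1..k} S"
    and total: "\<And>\<eta>. mm_param k S \<eta> \<Longrightarrow> sum (mono_prob A k \<eta>) Y = 1"
    using MM unfolding monomial_model_def by auto
  have pos: "\<forall>l\<in>{1..k}. 0 < \<theta> l"
    using par unfolding mm_param_def by blast
  show "finite Y"
    using MM unfolding monomial_model_def by blast
  show "Y_neq Y A Sj \<subseteq> Y" "Y_neq Y A Sj \<noteq> {}"
    using nonempty unfolding Y_neq_def by auto
  show P_pos: "\<forall>y\<in>Y. 0 < mono_prob A k \<theta> y"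
    using pos unfolding mono_prob_def by (auto intro: prod_pos)
  show "sum (mono_prob A k \<theta>') Y = sum (mono_prob A k \<theta>) Y"
    using total[OF par] total[OF mm_param_cov_image[OF part par Sj cov]] by simp
  have "Sj \<subseteq> {1..k}"
    using part Sj unfolding partition_on_def by auto
  then have ratio:
    "(\<Prod>l\<in>Sj. (\<theta>' l / \<theta> l) ^ A y l) = mono_prob A k \<theta>' y / mono_prob A k \<theta> y" for y
    using pos cov unfolding cov_image_def by (intro mono_prob_ratio_block[symmetric]) auto
  show "\<forall>y\<in>Y. mono_prob A k \<theta>' y = mono_prob A k \<theta> y * (\<Prod>l\<in>Sj. (\<theta>' l / \<theta> l) ^ A y l)"
    using P_pos by (subst ratio) fastforce
  show "\<forall>y\<in>Y - Y_neq Y A Sj. (\<Prod>l\<in>Sj. (\<theta>' l / \<theta> l) ^ A y l) = 1"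
    unfolding Y_neq_def by auto
qed

lemma prod_prop_cov:
  assumes "finite Sj" "i \<in> Sj" "\<forall>l\<in>Sj. \<theta> l \<noteq> 0"
  shows "(\<Prod>l\<in>Sj. (prop_cov Sj i \<theta> t l / \<theta> l) ^ A y l)
       = (t / \<theta> i) ^ A y i * ((1 - t) / (1 - \<theta> i)) ^ (\<Sum>l\<in>Sj - {i}. A y l)"
proof -
  have "(\<Prod>l\<in>Sj - {i}. (prop_cov Sj i \<theta> t l / \<theta> l) ^ A y l)
      = (\<Prod>l\<in>Sj - {i}. ((1 - t) / (1 - \<theta> i)) ^ A y l)"
    using assms(3) by (intro prod.cong) (auto simp: prop_cov_def)
  then show ?thesis
    using assms(1,2) by (simp add: prod.remove prop_cov_def power_sum)
qed

lemma prod_uni_cov: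
  assumes "finite Sj" "i \<in> Sj"
  shows "(\<Prod>l\<in>Sj. (uni_cov Sj i \<theta> t l / \<theta> l) ^ A y l)
       = t ^ A y i * ((1 - t) / (real (card Sj) - 1)) ^ (\<Sum>l\<in>Sj - {i}. A y l)
           / (\<Prod>l\<in>Sj. \<theta> l ^ A y l)"
proof -
  have "(\<Prod>l\<in>Sj - {i}. uni_cov Sj i \<theta> t l ^ A y l)
      = (\<Prod>l\<in>Sj - {i}. ((1 - t) / (real (card Sj) - 1)) ^ A y l)"
    by (intro prod.cong) (auto simp: uni_cov_def)
  then show ?thesis
    using assms by (simp add: prod_dividef power_divide prod.remove uni_cov_def power_sum)
qed

lemma prod_lin_cov:
  assumes "finite Sj" "i \<in> Sj"
  shows "(\<Prod>l\<in>Sj. (lin_cov Sj i \<theta> \<gamma> \<delta> t l / \<theta> l) ^ A y l)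
       = (t / \<theta> i) ^ A y i * (\<Prod>m\<in>Sj - {i}. ((\<gamma> m * t + \<delta> m) / \<theta> m) ^ A y m)"
proof -
  have "(\<Prod>m\<in>Sj - {i}. (lin_cov Sj i \<theta> \<gamma> \<delta> t m / \<theta> m) ^ A y m)
      = (\<Prod>m\<in>Sj - {i}. ((\<gamma> m * t + \<delta> m) / \<theta> m) ^ A y m)"
    by (intro prod.cong) (auto simp: lin_cov_def)
  then show ?thesis
    using assms by (simp add: prod.remove lin_cov_def)
qed

theorem theorem2:
  fixes Y :: "'y set" and A :: "'y \<Rightarrow> nat \<Rightarrow> nat" and k :: nat
    and S :: "nat set set" and \<theta> :: "nat \<Rightarrow> real" and Sj :: "nat set" and i :: nat and t :: real
  assumes MM: "monomial_model Y A k S"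
    and par: "mm_param k S \<theta>"
    and Sj: "Sj \<in> S" and i: "i \<in> Sj"
    and t: "0 < t" "t < 1"
    and nonempty: "Y_neq Y A Sj \<noteq> {}"
  shows
   "(\<forall>\<theta>'. cov_image k Sj i \<theta> t \<theta>' \<longrightarrow>
      cd_dist Y (mono_prob A k \<theta>') (mono_prob A k \<theta>) =
        ln (Max ((\<lambda>y. \<Prod>l\<in>Sj. (\<theta>' l / \<theta> l) ^ A y l) ` Y_neq Y A Sj))
      - ln (Min ((\<lambda>y. \<Prod>l\<in>Sj. (\<theta>' l / \<theta> l) ^ A y l) ` Y_neq Y A Sj)))
  \<and> (cov_image k Sj i \<theta> t (prop_cov Sj i \<theta> t) \<longrightarrow>
      cd_dist Y (mono_prob A k (prop_cov Sj i \<theta> t)) (mono_prob A k \<theta>) =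
        ln (Max ((\<lambda>y. (t / \<theta> i) ^ A y i * ((1 - t) / (1 - \<theta> i)) ^ (\<Sum>l\<in>Sj - {i}. A y l)) ` Y_neq Y A Sj))
      - ln (Min ((\<lambda>y. (t / \<theta> i) ^ A y i * ((1 - t) / (1 - \<theta> i)) ^ (\<Sum>l\<in>Sj - {i}. A y l)) ` Y_neq Y A Sj)))
  \<and> (cov_image k Sj i \<theta> t (uni_cov Sj i \<theta> t) \<longrightarrow>
      cd_dist Y (mono_prob A k (uni_cov Sj i \<theta> t)) (mono_prob A k \<theta>) =
        ln (Max ((\<lambda>y. t ^ A y i * ((1 - t) / (real (card Sj) - 1)) ^ (\<Sum>l\<in>Sj - {i}. A y l)
                       / (\<Prod>l\<in>Sj. \<theta> l ^ A y l)) ` Y_neq Y A Sj))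
      - ln (Min ((\<lambda>y. t ^ A y i * ((1 - t) / (real (card Sj) - 1)) ^ (\<Sum>l\<in>Sj - {i}. A y l)
                       / (\<Prod>l\<in>Sj. \<theta> l ^ A y l)) ` Y_neq Y A Sj)))
  \<and> (\<forall>\<gamma> \<delta>. cov_image k Sj i \<theta> t (lin_cov Sj i \<theta> \<gamma> \<delta> t) \<longrightarrow>
      cd_dist Y (mono_prob A k (lin_cov Sj i \<theta> \<gamma> \<delta> t)) (mono_prob A k \<theta>) =
        ln (Max ((\<lambda>y. (t / \<theta> i) ^ A y i * (\<Prod>m\<in>Sj - {i}. ((\<gamma> m * t + \<delta> m) / \<theta> m) ^ A y m)) ` Y_neq Y A Sj))
      - ln (Min ((\<lambda>y. (t / \<theta> i) ^ A y i * (\<Prod>m\<in>Sj - {i}. ((\<gamma> m * t + \<delta> m) / \<theta> m) ^ A y m)) ` Y_neq Y A Sj)))"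
proof -
  have Sj_sub: "Sj \<subseteq> {1..k}"
    using MM Sj unfolding monomial_model_def partition_on_def by auto
  then have "finite Sj"
    by (rule finite_subset) simp
  moreover have "\<forall>l\<in>Sj. \<theta> l \<noteq> 0"
    using par Sj_sub unfolding mm_param_def by fastforce
  ultimately show ?thesis
    using cd_dist_cov_image[OF MM par Sj nonempty]
    by (intro conjI allI impI)
      (simp_all only: prod_prop_cov prod_uni_cov prod_lin_cov i)
qed

end
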